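(* Define $a_0 = 0$ and $a_n = \sum_{k=0}^{n-1} k!\,(n-k-1)!$ for $n \geq 1$. Then for every natural number $n$, $$a_n = (-1)^{n-1} \sum_{k=0}^{n} G_k\, s(n,k).$$
   Context: The Genocchi numbers $G_n$ ($n \in \mathbb{N}$) are defined by the exponential generating function $\frac{2x}{e^x+1} = \sum_{n=0}^{\infty} G_n \frac{x^n}{n!}$. The (signed) Stirling numbers of the first kind $s(n,k)$ ($0 \le k \le n$) are the integers defined by the polynomial identity $X(X-1)\cdots(X-n+1) = \sum_{k=0}^{n} s(n,k) X^k$. *)

theory Defs
  imports "HOL-Computational_Algebra.Computational_Algebra"
begin

definition genocchi_egf :: "rat fps" where
  "genocchi_egf = (2 * fps_X) / (fps_exp 1 + 1)"

definition genocchi :: "nat \<Rightarrow> rat" where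
  "genocchi n = fact n * fps_nth genocchi_egf n"

definition stirling1s :: "nat \<Rightarrow> nat \<Rightarrow> int" where
  "stirling1s n k = coeff (\<Prod>i<n. [:- of_nat i, 1:]) k"

definition seq_a :: "nat \<Rightarrow> nat" where
  "seq_a n = (if n = 0 then 0 else (\<Sum>k=0..n-1. fact k * fact (n - k - 1)))"

end

theory Submission
  imports Defs
begin

text \<open>Let \<open>L\<close> be the linear functional on polynomials sending \<open>x\<^sup>k\<close> to \<open>G\<^sub>k\<close>, so that the sum
  in the theorem is \<open>b\<^sub>n = L(x(x-1)\<cdots>(x-n+1))\<close>. The generating function gives the Genocchi recurrence
  \<open>\<Sum>\<^sub>j C(k,j) G\<^sub>j + G\<^sub>k = 2[k = 1]\<close>, i.e. \<open>L(p(x+1)) + L(p) = 2p'(0)\<close> for every polynomial \<open>p\<close>.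
  Applied to the falling factorial of length \<open>n+1\<close>, whose shift is itself plus \<open>(n+1)\<close> times the
  one of length \<open>n\<close>, and whose linear coefficient is \<open>(-1)\<^sup>n n!\<close>, this yields
  \<open>2b\<^sub>n\<^sub>+\<^sub>1 + (n+1)b\<^sub>n = 2(-1)\<^sup>n n!\<close>. A telescoping argument shows
  \<open>2a\<^sub>n\<^sub>+\<^sub>1 = (n+1)a\<^sub>n + 2n!\<close>, and both sequences vanish at \<open>0\<close>.\<close>

definition falling_poly :: "nat \<Rightarrow> 'a::comm_ring_1 poly" where
  "falling_poly n = (\<Prod>i<n. [:- of_nat i, 1:])"

lemma falling_poly_Suc: "falling_poly (Suc n) = [:- of_nat n, 1:] * falling_poly n"
  by (simp add: falling_poly_def mult.commute)

lemma degree_falling_poly_le: "degree (falling_poly n :: 'a::comm_ring_1 poly) \<le> n"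
proof -
  have "degree (falling_poly n :: 'a poly) \<le>
      sum (degree \<circ> (\<lambda>i. [:- of_nat i, 1:] :: 'a poly)) {..<n}"
    unfolding falling_poly_def by (rule degree_prod_sum_le) simp
  then show ?thesis
    by simp
qed

lemma map_poly_of_int_mult:
  "map_poly (of_int :: int \<Rightarrow> 'a::comm_ring_1) (p * q) = map_poly of_int p * map_poly of_int q"
  by (simp add: poly_eq_iff coeff_map_poly coeff_mult)

lemma map_poly_of_int_falling_poly:
  "(map_poly of_int (falling_poly n) :: 'a::comm_ring_1 poly) = falling_poly n"
proof (induction n)
  case 0
  then show ?case by (simp add: falling_poly_def)
next
  case (Suc n)
  have "(map_poly of_int [:- of_nat n, 1:] :: 'a poly) = [:- of_nat n, 1:]"
    by (simp add: map_poly_pCons)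
  then show ?case
    using Suc.IH by (simp only: falling_poly_Suc map_poly_of_int_mult)
qed

lemma of_int_stirling1s: "of_int (stirling1s n k) = (coeff (falling_poly n) k :: 'a::comm_ring_1)"
proof -
  have "of_int (stirling1s n k) = (coeff (map_poly of_int (falling_poly n)) k :: 'a)"
    by (simp add: coeff_map_poly stirling1s_def falling_poly_def)
  then show ?thesis
    by (simp only: map_poly_of_int_falling_poly)
qed

lemma coeff_falling_poly_Suc_0: "coeff (falling_poly (Suc n)) 0 = 0"
  by (induction n) (simp_all add: falling_poly_Suc[of "Suc _"] falling_poly_Suc[of 0] falling_poly_def)

lemma coeff_falling_poly_Suc_1:
  "coeff (falling_poly (Suc n) :: 'a::comm_ring_1 poly) 1 = (-1) ^ n * of_nat (fact n :: nat)"
proof (induction n)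
  case 0
  then show ?case by (simp add: falling_poly_def)
next
  case (Suc n)
  have "coeff (falling_poly (Suc (Suc n)) :: 'a poly) 1 =
      - of_nat (Suc n) * coeff (falling_poly (Suc n)) 1"
    using coeff_falling_poly_Suc_0[of n]
    by (simp add: falling_poly_Suc[of "Suc n"] del: of_nat_Suc)
  also have "\<dots> = (-1) ^ Suc n * of_nat (fact (Suc n) :: nat)"
    unfolding Suc.IH by (simp add: algebra_simps)
  finally show ?case .
qed

lemma falling_poly_pcompose_shift:
  "falling_poly (Suc n) \<circ>\<^sub>p [:1, 1:] = falling_poly (Suc n) + smult (of_nat (Suc n)) (falling_poly n)"
proof -
  have "falling_poly (Suc n) \<circ>\<^sub>p [:1, 1:] = (\<Prod>i<Suc n. [:1 - of_nat i, 1:])"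
    unfolding falling_poly_def pcompose_prod by (intro prod.cong) (simp_all add: pcompose_pCons)
  also have "\<dots> = [:1, 1:] * falling_poly n"
    unfolding falling_poly_def prod.lessThan_Suc_shift by simp
  also have "\<dots> = ([:- of_nat n, 1:] + [:of_nat (Suc n):]) * falling_poly n"
    by (simp add: algebra_simps)
  finally show ?thesis
    by (simp only: distrib_right falling_poly_Suc) simp
qed

lemma genocchi_egf_mult: "genocchi_egf * (fps_exp 1 + 1) = 2 * fps_X"
proof -
  have "(fps_exp (1::rat) + 1) $ 0 \<noteq> 0" by simp
  then show ?thesis
    unfolding genocchi_egf_def by (simp add: fps_divide_unit mult.assoc inverse_mult_eq_1)
qed

lemma genocchi_recurrence:
  "(\<Sum>j\<le>k. of_nat (k choose j) * genocchi j) + genocchi k = (if k = 1 then 2 else 0)"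
proof -
  have "(2 * fps_X :: rat fps) $ k = (if k = 1 then 2 else 0)"
    by (simp add: numeral_fps_const fps_X_def)
  then have "(genocchi_egf * (fps_exp 1 + 1)) $ k = (if k = 1 then 2 else 0)"
    by (simp only: genocchi_egf_mult)
  then have "(\<Sum>j\<le>k. genocchi_egf $ j / fact (k - j)) + genocchi_egf $ k =
      (if k = 1 then 2 else 0)"
    by (simp add: distrib_left fps_mult_nth atLeast0AtMost)
  then have "fact k * ((\<Sum>j\<le>k. genocchi_egf $ j / fact (k - j)) + genocchi_egf $ k) =
      (if k = 1 then 2 else 0)"
    by simp
  moreover have "fact k * (genocchi_egf $ j / fact (k - j)) = of_nat (k choose j) * genocchi j"
    if "j \<le> k" for j
  proof -
    have "(of_nat (k choose j) :: rat) = fact k / (fact j * fact (k - j))"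
      using binomial_fact[OF that] .
    then show ?thesis
      unfolding genocchi_def by (simp add: field_simps)
  qed
  ultimately show ?thesis
    by (simp add: distrib_left sum_distrib_left genocchi_def)
qed

lemma genocchi_0: "genocchi 0 = 0"
  using genocchi_recurrence[of 0] by simp

definition genocchi_functional :: "rat poly \<Rightarrow> rat" where
  "genocchi_functional p = (\<Sum>k\<le>degree p. genocchi k * coeff p k)"

lemma genocchi_functional_eq:
  "degree p \<le> N \<Longrightarrow> genocchi_functional p = (\<Sum>k\<le>N. genocchi k * coeff p k)"
  unfolding genocchi_functional_def by (rule sum.mono_neutral_left) (auto simp: coeff_eq_0)

lemma genocchi_functional_0 [simp]: "genocchi_functional 0 = 0"
  by (simp add: genocchi_functional_def)

lemma genocchi_functional_add:
  "genocchi_functional (p + q) = genocchi_functional p + genocchi_functional q"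
proof -
  let ?N = "max (degree p) (degree q)"
  have "degree (p + q) \<le> ?N"
    by (rule degree_add_le) auto
  then show ?thesis
    by (simp add: genocchi_functional_eq[of _ ?N] sum.distrib distrib_left)
qed

lemma genocchi_functional_smult: "genocchi_functional (smult c p) = c * genocchi_functional p"
  by (simp add: genocchi_functional_eq[of _ "degree p"] sum_distrib_left algebra_simps)

lemma genocchi_functional_sum:
  "finite A \<Longrightarrow> genocchi_functional (sum f A) = (\<Sum>i\<in>A. genocchi_functional (f i))"
  by (induction A rule: finite_induct) (simp_all add: genocchi_functional_add)

lemma genocchi_functional_monom: "genocchi_functional (monom c i) = c * genocchi i"
proof -
  have "genocchi_functional (monom c i) = (\<Sum>k\<le>i. genocchi k * coeff (monom c i) k)"
    by (rule genocchi_functional_eq) (simp add: degree_monom_le)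
  also have "\<dots> = (\<Sum>k\<le>i. if k = i then genocchi k * c else 0)"
    by (rule sum.cong) (auto simp: coeff_monom)
  finally show ?thesis by simp
qed

lemma genocchi_functional_linear_power:
  "genocchi_functional ([:1, 1:] ^ i) = (\<Sum>j\<le>i. of_nat (i choose j) * genocchi j)"
proof -
  have "degree ([:1, 1:] ^ i :: rat poly) \<le> i"
    by (metis degree_linear_power order_refl)
  then show ?thesis
    by (simp add: genocchi_functional_eq[of _ i] coeff_linear_poly_power mult.commute)
qed

lemma pcompose_monom: "monom c i \<circ>\<^sub>p q = smult c (q ^ i)"
  by (induction i) (simp_all add: monom_altdef pcompose_smult pcompose_mult pcompose_pCons)

lemma genocchi_functional_pcompose_shift:
  "genocchi_functional (p \<circ>\<^sub>p [:1, 1:]) + genocchi_functional p = 2 * coeff p 1"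
proof -
  define d where "d = degree p"
  have p: "p = (\<Sum>i\<le>d. monom (coeff p i) i)"
    unfolding d_def by (simp add: poly_as_sum_of_monoms)
  have "genocchi_functional (p \<circ>\<^sub>p [:1, 1:]) + genocchi_functional p =
      (\<Sum>i\<le>d. coeff p i * (genocchi_functional ([:1, 1:] ^ i) + genocchi i))"
    by (subst (1 2) p)
      (simp add: pcompose_sum genocchi_functional_sum pcompose_monom genocchi_functional_smult
        genocchi_functional_monom algebra_simps sum.distrib del: power_Suc)
  also have "\<dots> = (\<Sum>i\<le>d. coeff p i * (if i = 1 then 2 else 0))"
    by (simp add: genocchi_functional_linear_power genocchi_recurrence)
  also have "\<dots> = 2 * coeff p 1"
  proof (cases "d = 0")
    case True
    then show ?thesis using d_def coeff_eq_0[of p 1] by simp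
  qed (simp add: sum.delta mult.commute if_distrib[of "\<lambda>x. coeff p _ * x"] cong: if_cong)
  finally show ?thesis .
qed

lemma genocchi_functional_falling_poly_recurrence:
  "2 * genocchi_functional (falling_poly (Suc n)) +
     of_nat (Suc n) * genocchi_functional (falling_poly n) = 2 * (-1) ^ n * fact n"
  using genocchi_functional_pcompose_shift[of "falling_poly (Suc n)"]
    coeff_falling_poly_Suc_1[of n, where 'a = rat]
  by (simp add: falling_poly_pcompose_shift genocchi_functional_add
      genocchi_functional_smult del: of_nat_Suc)

lemma seq_a_Suc: "seq_a (Suc n) = (\<Sum>k\<le>n. fact k * fact (n - k))"
  by (simp add: seq_a_def atLeast0AtMost)

lemma seq_a_recurrence: "2 * seq_a (Suc n) = Suc n * seq_a n + 2 * fact n"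
proof (cases n)
  case 0
  then show ?thesis by (simp add: seq_a_def)
next
  case (Suc m)
  define T :: "nat \<Rightarrow> nat" where "T k = fact k * fact (Suc m - k)" for k
  have weighted_term: "Suc n * (fact k * fact (m - k)) = T (Suc k) + T k" if "k \<le> m" for k
  proof -
    have "Suc n * (fact k * fact (m - k)) = (Suc k + Suc (m - k)) * (fact k * fact (m - k))"
      using that Suc by simp
    also have "\<dots> = fact (Suc k) * fact (m - k) + fact k * fact (Suc (m - k))"
      by (simp add: algebra_simps)
    finally show ?thesis
      using that by (simp add: T_def Suc_diff_le)
  qed
  have "Suc n * seq_a n = (\<Sum>k\<le>m. Suc n * (fact k * fact (m - k)))"
    by (simp only: Suc seq_a_Suc sum_distrib_left)
  also have "\<dots> = (\<Sum>k\<le>m. T (Suc k) + T k)"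
    by (intro sum.cong refl) (rule weighted_term, simp)
  also have "\<dots> = (\<Sum>k\<le>m. T (Suc k)) + (\<Sum>k\<le>m. T k)"
    by (rule sum.distrib)
  finally have "Suc n * seq_a n = (\<Sum>k\<le>m. T (Suc k)) + (\<Sum>k\<le>m. T k)" .
  moreover have "(\<Sum>k\<le>Suc m. T k) = T 0 + (\<Sum>k\<le>m. T (Suc k))"
    by (rule sum.atMost_Suc_shift)
  moreover have "(\<Sum>k\<le>Suc m. T k) = (\<Sum>k\<le>m. T k) + T (Suc m)"
    by (rule sum.atMost_Suc)
  moreover have "(\<Sum>k\<le>Suc m. T k) = seq_a (Suc n)"
    by (simp add: Suc seq_a_Suc T_def del: sum.atMost_Suc)
  moreover have "T 0 = fact n" "T (Suc m) = fact n"
    by (simp_all add: Suc T_def)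
  ultimately show ?thesis
    by linarith
qed

lemma seq_a_conv_genocchi_functional:
  "(of_nat (seq_a n) :: rat) = - ((-1) ^ n * genocchi_functional (falling_poly n))"
proof (induction n)
  case 0
  then show ?case by (simp add: seq_a_def falling_poly_def genocchi_functional_def genocchi_0)
next
  case (Suc n)
  have "2 * (of_nat (seq_a (Suc n)) :: rat) = of_nat (Suc n) * of_nat (seq_a n) + 2 * fact n"
    using arg_cong[OF seq_a_recurrence[of n], of "of_nat :: nat \<Rightarrow> rat"]
    by (simp only: of_nat_mult of_nat_add of_nat_numeral of_nat_fact)
  also have "\<dots> = (-1) ^ n *
      (2 * (-1) ^ n * fact n - of_nat (Suc n) * genocchi_functional (falling_poly n))"
    by (simp add: Suc.IH algebra_simps flip: power_add)
  also have "\<dots> = 2 * (- ((-1) ^ Suc n * genocchi_functional (falling_poly (Suc n))))"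
    by (simp flip: genocchi_functional_falling_poly_recurrence del: of_nat_Suc)
  finally show ?case by simp
qed

theorem corollary2:
  fixes n :: nat
  shows "(of_nat (seq_a n) :: rat) =
         (-1) ^ (n - 1) * (\<Sum>k=0..n. genocchi k * of_int (stirling1s n k))"
proof -
  have "(\<Sum>k=0..n. genocchi k * of_int (stirling1s n k)) = genocchi_functional (falling_poly n)"
    by (simp add: genocchi_functional_eq[OF degree_falling_poly_le] of_int_stirling1s atLeast0AtMost)
  then show ?thesis
    using seq_a_conv_genocchi_functional[of n] by (cases n) (simp_all add: seq_a_def genocchi_0)
qed

end
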